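(* Let $\kappa$ be an infinite cardinal, $\mathcal{U}$ a superfine ultrafilter on $\kappa$, and consider the ring of Euclidean integers $\mathbb{Z}^\kappa/\mathcal{U}$ with $\Sigma(\mathbf{x})=[\mathbf{f}_{\mathbf{x}}]_{\mathcal{U}}$. Let $\eta<\kappa$ and let $(x_{\beta\gamma})_{\beta,\gamma<\kappa}$ be integers with $x_{\beta\gamma}=0$ whenever $\beta\ge2^\eta$ or $\gamma\ge2^\eta$. Define the double sum $\sum_{\beta,\gamma}x_{\beta\gamma}=\sum_\varepsilon w_\varepsilon$ where $w_\varepsilon=\sum_{\beta\vee\gamma=\varepsilon}x_{\beta\gamma}$, and define $\mathbf{y}$ by $y_\alpha=x_{\beta\gamma}$ if $\alpha=2^\eta\beta+\gamma$ with $\beta,\gamma<2^\eta$, and $y_\alpha=0$ otherwise. Then $\sum_{\beta,\gamma}x_{\beta\gamma}=\sum_\alpha y_\alpha$.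
   Context: Every ordinal $\alpha$ has a unique base-2 normal form $\alpha=2^{\alpha_1}+\dots+2^{\alpha_n}$ with $\alpha_1>\dots>\alpha_n$; put $L_\alpha=\{\alpha_1,\dots,\alpha_n\}$. Formal inclusion: $\alpha\sqsubseteq\beta$ iff $L_\alpha\subseteq L_\beta$, $\alpha\sqsubset\beta$ iff $L_\alpha\subsetneq L_\beta$. $\alpha\vee\beta$ is the ordinal $\gamma$ with $L_\gamma=L_\alpha\cup L_\beta$. For $\mathbf{x}\in\mathbb{Z}^\kappa$, $\mathbf{f}_{\mathbf{x}}(\alpha)=\sum_{\beta\sqsubseteq\alpha}x_\beta$, and $[\cdot]_{\mathcal U}$ is the class in the ultrapower $\mathbb{Z}^\kappa/\mathcal U$. For $\theta<\kappa$ the cone is $C(\theta)=\{\alpha<\kappa\mid\theta\sqsubset\alpha\}$. For $\eta<\kappa$, $D(\eta)=\{2^{\eta\cdot2}\alpha+2^\eta\xi+\xi\mid \xi<2^\eta,\ \alpha<\kappa\}$ (ordinal arithmetic). An ultrafilter on $\kappa$ is superfine if it contains $D(\eta)\cap C(\theta)$ for all $\eta,\theta<\kappa$ (in particular it contains all cones). *)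

theory Defs
  imports Main
begin

text \<open>The infinite cardinal kappa is represented by a well-ordered type 'k whose order type
  is kappa: elements of 'k are the ordinals below kappa.\<close>

definition inf_card_type :: "'k::wellorder itself \<Rightarrow> bool" where
  "inf_card_type _ \<longleftrightarrow> infinite (UNIV :: 'k set) \<and>
     (\<forall>a::'k. ordLess2 (card_of {..<a}) (card_of (UNIV :: 'k set)))"

definition oiso :: "'a set \<Rightarrow> ('a \<Rightarrow> 'a \<Rightarrow> bool) \<Rightarrow> 'b set \<Rightarrow> ('b \<Rightarrow> 'b \<Rightarrow> bool) \<Rightarrow> bool" where
  "oiso A R B S \<longleftrightarrow> (\<exists>f. bij_betw f A B \<and> (\<forall>x\<in>A. \<forall>y\<in>A. R x y \<longleftrightarrow> S (f x) (f y)))"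

definition ozero :: "'k::wellorder" where
  "ozero = (LEAST x. True)"

fun sum_less :: "'k::wellorder + 'k \<Rightarrow> 'k + 'k \<Rightarrow> bool" where
  "sum_less (Inl x) (Inl y) = (x < y)"
| "sum_less (Inl x) (Inr y) = True"
| "sum_less (Inr x) (Inl y) = False"
| "sum_less (Inr x) (Inr y) = (x < y)"

definition oadd :: "'k::wellorder \<Rightarrow> 'k \<Rightarrow> 'k" where
  "oadd a b = (THE c. oiso {..<c} (<) ({..<a} <+> {..<b}) sum_less)"

text \<open>Ordinal product a*b: order type of b copies of a (anti-lexicographic order).\<close>
definition omul :: "'k::wellorder \<Rightarrow> 'k \<Rightarrow> 'k" where
  "omul a b = (THE c. oiso {..<c} (<) ({..<a} \<times> {..<b})
      (\<lambda>(x1,y1) (x2,y2). y1 < y2 \<or> (y1 = y2 \<and> x1 < x2)))"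

text \<open>Ordinal power 2^a: order type of the finitely supported functions a -> 2 (identified
  with their finite supports), ordered by comparison at the largest point of difference.\<close>
definition oexp2 :: "'k::wellorder \<Rightarrow> 'k" where
  "oexp2 a = (THE c. oiso {..<c} (<) {S. finite S \<and> S \<subseteq> {..<a}}
      (\<lambda>S T. S \<noteq> T \<and> Max ((S - T) \<union> (T - S)) \<in> T))"

fun nf_val :: "'k::wellorder list \<Rightarrow> 'k" where
  "nf_val [] = ozero"
| "nf_val (a # as) = oadd (oexp2 a) (nf_val as)"

definition Lset :: "'k::wellorder \<Rightarrow> 'k set" where
  "Lset a = set (THE xs. sorted_wrt (>) xs \<and> nf_val xs = a)"

definition ojoin :: "'k::wellorder \<Rightarrow> 'k \<Rightarrow> 'k" where
  "ojoin a b = (THE c. Lset c = Lset a \<union> Lset b)"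

definition fvec :: "('k::wellorder \<Rightarrow> int) \<Rightarrow> 'k \<Rightarrow> int" where
  "fvec x a = (\<Sum>b\<in>{b. Lset b \<subseteq> Lset a}. x b)"

definition cone :: "'k::wellorder \<Rightarrow> 'k set" where
  "cone \<theta> = {a. Lset \<theta> \<subset> Lset a}"

definition Dset :: "'k::wellorder \<Rightarrow> 'k set" where
  "Dset \<eta> = {oadd (oadd (omul (oexp2 (oadd \<eta> \<eta>)) a) (omul (oexp2 \<eta>) \<xi>)) \<xi> | \<xi> a.
              \<xi> < oexp2 \<eta>}"

definition is_ultrafilter :: "'a set set \<Rightarrow> bool" where
  "is_ultrafilter U \<longleftrightarrow> UNIV \<in> U \<and> {} \<notin> U \<and> (\<forall>A B. A \<in> U \<longrightarrow> A \<subseteq> B \<longrightarrow> B \<in> U) \<and>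
     (\<forall>A\<in>U. \<forall>B\<in>U. A \<inter> B \<in> U) \<and> (\<forall>A. A \<in> U \<or> - A \<in> U)"

definition superfine :: "'k::wellorder set set \<Rightarrow> bool" where
  "superfine U \<longleftrightarrow> is_ultrafilter U \<and> (\<forall>\<eta> \<theta>. Dset \<eta> \<inter> cone \<theta> \<in> U)"

definition ucls :: "'k set set \<Rightarrow> ('k \<Rightarrow> int) \<Rightarrow> ('k \<Rightarrow> int) set" where
  "ucls U f = {g. {a. f a = g a} \<in> U}"

definition Esum :: "'k::wellorder set set \<Rightarrow> ('k \<Rightarrow> int) \<Rightarrow> ('k \<Rightarrow> int) set" where
  "Esum U x = ucls U (fvec x)"

definition dsum :: "'k::wellorder set set \<Rightarrow> ('k \<Rightarrow> 'k \<Rightarrow> int) \<Rightarrow> ('k \<Rightarrow> int) set" where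
  "dsum U x = Esum U (\<lambda>e. \<Sum>(b, g)\<in>{(b, g). ojoin b g = e}. x b g)"

definition yvec :: "'k::wellorder \<Rightarrow> ('k \<Rightarrow> 'k \<Rightarrow> int) \<Rightarrow> 'k \<Rightarrow> int" where
  "yvec \<eta> x a = (if \<exists>b g. b < oexp2 \<eta> \<and> g < oexp2 \<eta> \<and> a = oadd (omul (oexp2 \<eta>) b) g
     then (THE v. \<exists>b g. b < oexp2 \<eta> \<and> g < oexp2 \<eta> \<and> a = oadd (omul (oexp2 \<eta>) b) g \<and> v = x b g)
     else 0)"

end

(* Writing the ordinals below \<kappa> in base 2 identifies \<alpha> with the finite set L\<alpha> of its
   exponents, and the ordinal order with the colexicographic order on finite sets.  In these
   terms L(2^\<eta>\<beta> + \<gamma>) = (\<eta> + L\<beta>) \<union> L\<gamma> for \<beta>, \<gamma> < 2^\<eta>, L(\<beta> \<or> \<gamma>) = L\<beta> \<union> L\<gamma>, and every \<alpha> in D(\<eta>)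
   has L\<alpha> = H \<union> (\<eta> + L\<xi>) \<union> L\<xi> with L\<xi> below \<eta> and H above \<eta>\<cdot>2.  So for such \<alpha> both
   f_w(\<alpha>) and f_y(\<alpha>) are the sum of the x_\<beta>\<gamma> with \<beta>, \<gamma> < 2^\<eta> and L\<beta> \<union> L\<gamma> \<subseteq> L\<xi>, hence the
   two functions agree on D(\<eta>), which belongs to U. *)

theory Submission
  imports Defs "HOL-Library.Multiset_Order"
begin

section \<open>The colexicographic order on finite sets\<close>

definition colex_less :: "'a::linorder set \<Rightarrow> 'a set \<Rightarrow> bool" where
  "colex_less S T \<longleftrightarrow> S \<noteq> T \<and> Max ((S - T) \<union> (T - S)) \<in> T"

lemma colex_less_iff_mset_less:
  fixes S T :: "'a::linorder set"
  assumes fin: "finite S" "finite T"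
  shows "colex_less S T \<longleftrightarrow> mset_set S < mset_set T"
proof -
  have cnt: "count (mset_set X) y = (if y \<in> X then 1 else 0)" if "finite X" for X and y :: 'a
    using that by (simp add: count_mset_set)
  have eq: "mset_set S = mset_set T \<longleftrightarrow> S = T" using fin by (metis finite_set_mset_mset_set)
  let ?D = "(S - T) \<union> (T - S)"
  have fD: "finite ?D" using fin by auto
  show ?thesis
  proof
    assume "colex_less S T"
    then have ne: "S \<noteq> T" and m: "Max ?D \<in> T" unfolding colex_less_def by auto
    have mD: "Max ?D \<in> ?D" using Max_in[OF fD] ne by auto
    show "mset_set S < mset_set T" unfolding less_multiset\<^sub>H\<^sub>O
    proof (intro conjI allI impI)
      show "mset_set S \<noteq> mset_set T" using eq ne by simp
    next
      fix y assume "count (mset_set T) y < count (mset_set S) y"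
      then have y: "y \<in> S" "y \<notin> T" unfolding cnt[OF fin(1)] cnt[OF fin(2)] by (auto split: if_splits)
      have "y \<le> Max ?D" using y fD by (intro Max_ge) auto
      then have "y < Max ?D" "Max ?D \<notin> S" using y m mD by (auto simp: le_less)
      then show "\<exists>x>y. count (mset_set S) x < count (mset_set T) x"
        using m cnt[OF fin(1)] cnt[OF fin(2)] by (intro exI[of _ "Max ?D"]) simp
    qed
  next
    assume less: "mset_set S < mset_set T"
    then have ne: "S \<noteq> T" by auto
    have mD: "Max ?D \<in> ?D" using Max_in[OF fD] ne by auto
    have "Max ?D \<in> T"
    proof (rule ccontr)
      assume "Max ?D \<notin> T"
      then have "count (mset_set T) (Max ?D) < count (mset_set S) (Max ?D)"
        using mD cnt fin by simp
      then obtain x where x: "Max ?D < x" "count (mset_set S) x < count (mset_set T) x"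
        using less unfolding less_multiset\<^sub>H\<^sub>O by blast
      then have "x \<in> ?D" unfolding cnt[OF fin(1)] cnt[OF fin(2)] by (auto split: if_splits)
      then have "x \<le> Max ?D" using fD by simp
      then show False using x(1) by simp
    qed
    then show "colex_less S T" using ne unfolding colex_less_def by simp
  qed
qed

lemma colex_less_irrefl [simp]: "\<not> colex_less S S"
  by (simp add: colex_less_def)

lemma colex_less_trans:
  "finite S \<Longrightarrow> finite T \<Longrightarrow> finite V \<Longrightarrow> colex_less S T \<Longrightarrow> colex_less T V \<Longrightarrow> colex_less S V"
  by (simp add: colex_less_iff_mset_less)

lemma colex_less_linear:
  "finite S \<Longrightarrow> finite T \<Longrightarrow> S \<noteq> T \<Longrightarrow> colex_less S T \<or> colex_less T S"
  by (metis colex_less_iff_mset_less finite_set_mset_mset_set neqE)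

lemma not_colex_less_empty: "\<not> colex_less S {}"
  by (simp add: colex_less_def)

lemma empty_colex_less: "finite T \<Longrightarrow> T \<noteq> {} \<Longrightarrow> colex_less {} T"
  by (simp add: colex_less_def)

lemma colex_less_bounded:
  assumes "finite S" "finite T" "colex_less S T" "s \<in> S"
  shows "\<exists>t\<in>T. s \<le> t"
proof (cases "s \<in> T")
  case False
  then have "s \<le> Max ((S - T) \<union> (T - S))" using assms by simp
  then show ?thesis using assms(3) unfolding colex_less_def by blast
qed auto

lemma colex_less_subset_atMost:
  assumes "finite S" "finite T" "colex_less S T"
  shows "S \<subseteq> {..Max T}"
proof
  fix s assume "s \<in> S"
  then obtain t where "t \<in> T" "s \<le> t" using colex_less_bounded assms by blast
  then have "s \<le> Max T" using assms(2) Max_ge order.trans by blast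
  then show "s \<in> {..Max T}" by simp
qed

lemma colex_less_singleton_iff: "finite S \<Longrightarrow> colex_less S {x} \<longleftrightarrow> S \<subseteq> {..<x}"
proof
  assume fS: "finite S" and less: "colex_less S {x}"
  let ?D = "(S - {x}) \<union> ({x} - S)"
  have m: "Max ?D = x" and ne: "S \<noteq> {x}" using less unfolding colex_less_def by auto
  have fD: "finite ?D" using fS by auto
  have "?D \<noteq> {}" using ne by auto
  then have "x \<in> ?D" using m Max_in[OF fD] by metis
  then have xS: "x \<notin> S" by auto
  show "S \<subseteq> {..<x}"
  proof
    fix s assume "s \<in> S"
    then have "s \<le> x" using m fD xS by (metis Diff_iff Max_ge UnI1 singletonD)
    then show "s \<in> {..<x}" using \<open>s \<in> S\<close> xS by (auto simp: le_less)
  qed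
next
  assume fS: "finite S" and low: "S \<subseteq> {..<x}"
  then have "(S - {x}) \<union> ({x} - S) = insert x S" by auto
  moreover have "Max (insert x S) = x" using fS low by (intro Max_eqI) (auto simp: less_imp_le)
  ultimately show "colex_less S {x}" unfolding colex_less_def using low by auto
qed

lemma colex_less_Un_iff:
  fixes A1 A2 B1 B2 :: "'a::linorder set"
  assumes fin: "finite A1" "finite A2" "finite B1" "finite B2"
    and below: "\<forall>a\<in>A1 \<union> A2. \<forall>b\<in>B1 \<union> B2. a < b"
  shows "colex_less (A1 \<union> B1) (A2 \<union> B2) \<longleftrightarrow> colex_less B1 B2 \<or> (B1 = B2 \<and> colex_less A1 A2)"
proof (cases "B1 = B2")
  case True
  have D: "((A1 \<union> B1) - (A2 \<union> B2)) \<union> ((A2 \<union> B2) - (A1 \<union> B1)) = (A1 - A2) \<union> (A2 - A1)"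
    using True below by auto
  have eq: "A1 \<union> B1 = A2 \<union> B2 \<longleftrightarrow> A1 = A2" using True below by blast
  show ?thesis
  proof (cases "A1 = A2")
    case False
    then have "Max ((A1 - A2) \<union> (A2 - A1)) \<in> A1 \<union> A2"
      using Max_in[of "(A1 - A2) \<union> (A2 - A1)"] fin by auto
    then have "Max ((A1 - A2) \<union> (A2 - A1)) \<in> A2 \<union> B2 \<longleftrightarrow> Max ((A1 - A2) \<union> (A2 - A1)) \<in> A2"
      using below True by blast
    then show ?thesis unfolding colex_less_def D eq using True colex_less_irrefl by simp
  qed (simp add: True colex_less_def)
next
  case False
  let ?D = "((A1 \<union> B1) - (A2 \<union> B2)) \<union> ((A2 \<union> B2) - (A1 \<union> B1))"
  let ?E = "(B1 - B2) \<union> (B2 - B1)"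
  have fE: "finite ?E" and fD: "finite ?D" using fin by auto
  have mE: "Max ?E \<in> ?E" using Max_in[OF fE] False by auto
  have "Max ?D = Max ?E"
  proof (rule Max_eqI[OF fD])
    show "Max ?E \<in> ?D" using mE below by blast
    fix y assume "y \<in> ?D"
    then consider "y \<in> ?E" | "y \<in> A1 \<union> A2" by blast
    then show "y \<le> Max ?E"
    proof cases
      case 2
      then have "y < Max ?E" using below mE by blast
      then show ?thesis by simp
    qed (use fE in simp)
  qed
  moreover have "Max ?E \<in> A2 \<union> B2 \<longleftrightarrow> Max ?E \<in> B2" using below mE by blast
  moreover have "A1 \<union> B1 \<noteq> A2 \<union> B2" using False below by blast
  ultimately show ?thesis using False unfolding colex_less_def by auto
qed

lemma colex_less_image:
  fixes h :: "'a::linorder \<Rightarrow> 'b::linorder"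
  assumes "strict_mono h" "finite X" "finite Y"
  shows "colex_less (h ` X) (h ` Y) \<longleftrightarrow> colex_less X Y"
proof -
  have inj: "inj h" using assms(1) by (rule strict_mono_imp_inj_on)
  have D: "(h ` X - h ` Y) \<union> (h ` Y - h ` X) = h ` ((X - Y) \<union> (Y - X))"
    by (auto dest: injD[OF inj])
  show ?thesis
  proof (cases "X = Y")
    case False
    have "Max (h ` ((X - Y) \<union> (Y - X))) = h (Max ((X - Y) \<union> (Y - X)))"
      using mono_Max_commute[of h] strict_mono_mono[OF assms(1)] assms(2,3) False by auto
    then show ?thesis unfolding colex_less_def D using inj by (simp add: inj_image_mem_iff inj_image_eq_iff)
  qed (simp add: colex_less_def)
qed

lemma colex_less_Un_right:
  assumes "finite V" "finite P" "finite W" "\<forall>p\<in>P. \<forall>w\<in>W. w < p" "colex_less V P"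
  shows "colex_less V (P \<union> W)"
proof (cases "W = {}")
  case False
  have "colex_less ({} \<union> P) (W \<union> P) \<longleftrightarrow> colex_less P P \<or> (P = P \<and> colex_less {} W)"
    using assms by (intro colex_less_Un_iff) auto
  then have "colex_less P (P \<union> W)" using empty_colex_less[OF assms(3) False] by (simp add: Un_commute)
  then show ?thesis using colex_less_trans[OF assms(1,2) _ assms(5)] assms(2,3) by simp
qed (use assms in simp)

lemma colex_between_extends:
  fixes V P Q :: "'a::linorder set"
  assumes fin: "finite V" "finite P" "finite Q"
    and below: "\<forall>p\<in>P. \<forall>q\<in>Q. q < p"
    and less: "colex_less V (P \<union> Q)" and not_less: "\<not> colex_less V P"
  shows "P \<subseteq> V \<and> (\<forall>v\<in>V - P. \<forall>p\<in>P. v < p)"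
proof (cases "V = P")
  case False
  then have PV: "colex_less P V" using colex_less_linear[OF fin(2,1)] not_less by blast
  let ?D = "(P - V) \<union> (V - P)"
  define m where "m = Max ?D"
  have fD: "finite ?D" using fin by auto
  have mD: "m \<in> ?D" unfolding m_def using Max_in[OF fD] False by auto
  have mV: "m \<in> V" "m \<notin> P" using PV mD unfolding colex_less_def m_def by auto
  have max: "z \<in> ?D \<Longrightarrow> z \<le> m" for z unfolding m_def using fD by simp
  have low: "\<forall>p\<in>P. m < p"
  proof (rule ccontr)
    assume "\<not> (\<forall>p\<in>P. m < p)"
    then obtain p where "p \<in> P" "p \<le> m" by (auto simp: not_less)
    then have mQ: "\<forall>q\<in>Q. q < m" using below by (meson less_le_trans)
    let ?D' = "(V - (P \<union> Q)) \<union> ((P \<union> Q) - V)"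
    have "Max ?D' = m"
    proof (rule Max_eqI)
      show "finite ?D'" using fin by auto
      show "m \<in> ?D'" using mV mQ by auto
      fix z assume "z \<in> ?D'"
      show "z \<le> m"
      proof (cases "z \<in> Q")
        case False
        then have "z \<in> ?D" using \<open>z \<in> ?D'\<close> by blast
        then show ?thesis by (rule max)
      qed (use mQ in \<open>simp add: less_imp_le\<close>)
    qed
    then show False using less mV mQ unfolding colex_less_def by auto
  qed
  have "P \<subseteq> V" using low max by (meson DiffI UnI1 leD subsetI)
  moreover have "\<forall>v\<in>V - P. \<forall>p\<in>P. v < p"
  proof (intro ballI)
    fix v p assume "v \<in> V - P" "p \<in> P"
    then have "v \<le> m" using max by blast
    then show "v < p" using low \<open>p \<in> P\<close> by (meson le_less_trans)
  qed
  ultimately show ?thesis by blast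
qed simp

lemma colex_between_Diff_less:
  fixes V P Q :: "'a::linorder set"
  assumes fin: "finite V" "finite P" "finite Q"
    and below: "\<forall>p\<in>P. \<forall>q\<in>Q. q < p"
    and less: "colex_less V (P \<union> Q)" and not_less: "\<not> colex_less V P"
  shows "P \<subseteq> V" "colex_less (V - P) Q"
proof -
  have PV: "P \<subseteq> V" and low: "\<forall>v\<in>V - P. \<forall>p\<in>P. v < p"
    using colex_between_extends[OF assms] by auto
  show "P \<subseteq> V" by (rule PV)
  have "colex_less ((V - P) \<union> P) (Q \<union> P) \<longleftrightarrow> colex_less P P \<or> (P = P \<and> colex_less (V - P) Q)"
    using fin below low by (intro colex_less_Un_iff) auto
  moreover have "(V - P) \<union> P = V" "Q \<union> P = P \<union> Q" using PV by auto
  ultimately show "colex_less (V - P) Q" using less by auto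
qed

section \<open>Order types\<close>

lemma oiso_sym: "oiso A R B S \<Longrightarrow> oiso B S A R"
proof -
  assume "oiso A R B S"
  then obtain f where f: "bij_betw f A B" and iso: "\<forall>x\<in>A. \<forall>y\<in>A. R x y \<longleftrightarrow> S (f x) (f y)"
    unfolding oiso_def by blast
  let ?g = "inv_into A f"
  have "\<forall>x\<in>B. \<forall>y\<in>B. S x y \<longleftrightarrow> R (?g x) (?g y)"
  proof (intro ballI)
    fix x y assume "x \<in> B" "y \<in> B"
    then have "?g x \<in> A" "?g y \<in> A" "f (?g x) = x" "f (?g y) = y"
      using f by (auto simp: bij_betw_def intro: inv_into_into f_inv_into_f)
    then show "S x y \<longleftrightarrow> R (?g x) (?g y)" using iso by metis
  qed
  then show ?thesis using bij_betw_inv_into[OF f] unfolding oiso_def by blast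
qed

lemma oiso_trans: "oiso A R B S \<Longrightarrow> oiso B S C T \<Longrightarrow> oiso A R C T"
proof -
  assume "oiso A R B S" "oiso B S C T"
  then obtain f g where f: "bij_betw f A B" "\<forall>x\<in>A. \<forall>y\<in>A. R x y \<longleftrightarrow> S (f x) (f y)"
    and g: "bij_betw g B C" "\<forall>x\<in>B. \<forall>y\<in>B. S x y \<longleftrightarrow> T (g x) (g y)"
    unfolding oiso_def by blast
  have "\<forall>x\<in>A. \<forall>y\<in>A. R x y \<longleftrightarrow> T ((g \<circ> f) x) ((g \<circ> f) y)"
    using f g bij_betwE[OF f(1)] by simp
  then show ?thesis using bij_betw_trans[OF f(1) g(1)] unfolding oiso_def by blast
qed

lemma oiso_strict_monoI:
  fixes f :: "'a \<Rightarrow> 'b::order"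
  assumes "f ` A = B"
    and mono: "\<And>x y. x \<in> A \<Longrightarrow> y \<in> A \<Longrightarrow> R x y \<Longrightarrow> f x < f y"
    and total: "\<And>x y. x \<in> A \<Longrightarrow> y \<in> A \<Longrightarrow> x \<noteq> y \<Longrightarrow> R x y \<or> R y x"
  shows "oiso A R B (<)"
proof -
  have "R x y \<longleftrightarrow> f x < f y" if "x \<in> A" "y \<in> A" for x y
    using mono[OF that] mono[OF that(2,1)] total[OF that] by (metis less_asym less_irrefl)
  moreover have "inj_on f A"
    by (rule inj_onI) (metis mono total less_irrefl)
  ultimately show ?thesis using assms(1) unfolding oiso_def bij_betw_def by blast
qed

lemma strict_mono_on_lessThan_ge:
  fixes h :: "'k::wellorder \<Rightarrow> 'k"
  assumes mono: "\<forall>x<c. \<forall>y<c. x < y \<longrightarrow> h x < h y" and "x < c"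
  shows "x \<le> h x"
  using \<open>x < c\<close>
proof (induction x rule: less_induct)
  case (less x)
  show ?case
  proof (rule ccontr)
    assume "\<not> x \<le> h x"
    then have "h x < x" by simp
    then have "h x \<le> h (h x)" and "h (h x) < h x" using less mono by auto
    then show False by simp
  qed
qed

lemma oiso_lessThan_le: "oiso {..<c} (<) {..<c'::'k::wellorder} (<) \<Longrightarrow> c \<le> c'"
proof (rule ccontr)
  assume "oiso {..<c} (<) {..<c'} (<)" "\<not> c \<le> c'"
  then obtain f where f: "bij_betw f {..<c} {..<c'}" "\<forall>x\<in>{..<c}. \<forall>y\<in>{..<c}. x < y \<longleftrightarrow> f x < f y"
    and "c' < c" unfolding oiso_def by auto
  then have "c' \<le> f c'" using strict_mono_on_lessThan_ge[of c f c'] by auto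
  moreover have "f c' < c'" using f(1) \<open>c' < c\<close> bij_betwE by fastforce
  ultimately show False by simp
qed

lemma order_type_eqI:
  assumes "oiso X R {..<c::'k::wellorder} (<)"
  shows "(THE d::'k. oiso {..<d} (<) X R) = c"
proof (rule the_equality)
  show "oiso {..<c} (<) X R" using oiso_sym[OF assms] .
  fix d :: 'k assume "oiso {..<d} (<) X R"
  then have "oiso {..<d} (<) {..<c} (<)" "oiso {..<c} (<) {..<d} (<)"
    using assms oiso_trans oiso_sym by blast+
  then show "d = c" using oiso_lessThan_le by (metis order_antisym)
qed

lemma oadd_eqI:
  fixes f h :: "'k::wellorder \<Rightarrow> 'k"
  assumes "f ` {..<a} \<union> h ` {..<b} = {..<c}"
    and "\<And>x y. x < y \<Longrightarrow> y < a \<Longrightarrow> f x < f y"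
    and "\<And>x y. x < y \<Longrightarrow> y < b \<Longrightarrow> h x < h y"
    and "\<And>x y. x < a \<Longrightarrow> y < b \<Longrightarrow> f x < h y"
  shows "oadd a b = c"
proof -
  have "oiso ({..<a} <+> {..<b}) sum_less {..<c} (<)"
  proof (rule oiso_strict_monoI[where f="case_sum f h"])
    show "case_sum f h ` ({..<a} <+> {..<b}) = {..<c}"
      using assms(1) by (auto simp: Plus_def image_Un image_image)
  qed (use assms(2-4) in \<open>auto elim!: PlusE\<close>)
  then show ?thesis unfolding oadd_def by (rule order_type_eqI)
qed

lemma omul_eqI:
  fixes g :: "'k::wellorder \<Rightarrow> 'k \<Rightarrow> 'k"
  assumes "(\<lambda>(x, y). g x y) ` ({..<a} \<times> {..<b}) = {..<c}"
    and "\<And>x1 y1 x2 y2. x1 < a \<Longrightarrow> x2 < a \<Longrightarrow> y1 < b \<Longrightarrow> y2 < b \<Longrightarrow>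
      y1 < y2 \<or> (y1 = y2 \<and> x1 < x2) \<Longrightarrow> g x1 y1 < g x2 y2"
  shows "omul a b = c"
proof -
  have "oiso ({..<a} \<times> {..<b}) (\<lambda>(x1,y1) (x2,y2). y1 < y2 \<or> (y1 = y2 \<and> x1 < x2)) {..<c} (<)"
    by (rule oiso_strict_monoI[OF assms(1)]) (auto intro: assms(2))
  then show ?thesis unfolding omul_def by (rule order_type_eqI)
qed

section \<open>Well-orders of type \<kappa>\<close>

context
  includes cardinal_syntax
begin

lemma card_of_finite_ordLess_infinite:
  assumes "finite A" "\<not> finite B"
  shows "|A| <o |B|"
proof -
  have "\<not> |B| \<le>o |A|" using card_of_ordLeq_finite assms by blast
  then show ?thesis using not_ordLeq_iff_ordLess[OF card_of_Well_order card_of_Well_order] by blast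
qed

lemma card_of_lists_length_ordLeq:
  "\<not> finite C \<Longrightarrow> |{xs. set xs \<subseteq> C \<and> length xs = n}| \<le>o |C|"
proof (induction n)
  case 0
  have "{xs. set xs \<subseteq> C \<and> length xs = 0} = {[]}" by auto
  moreover have "C \<noteq> {}" using 0 by auto
  ultimately show ?case using card_of_singl_ordLeq by metis
next
  case (Suc n)
  let ?L = "{xs. set xs \<subseteq> C \<and> length xs = n}"
  have "{xs. set xs \<subseteq> C \<and> length xs = Suc n} \<subseteq> (\<lambda>(x, xs). x # xs) ` (C \<times> ?L)"
  proof
    fix xs assume "xs \<in> {xs. set xs \<subseteq> C \<and> length xs = Suc n}"
    then obtain y ys where "xs = y # ys" "y \<in> C" "ys \<in> ?L" by (cases xs) auto
    then show "xs \<in> (\<lambda>(x, xs). x # xs) ` (C \<times> ?L)" by force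
  qed
  then have "|{xs. set xs \<subseteq> C \<and> length xs = Suc n}| \<le>o |(\<lambda>(x, xs). x # xs) ` (C \<times> ?L)|"
    using card_of_mono1 by blast
  also have "|(\<lambda>(x, xs). x # xs) ` (C \<times> ?L)| \<le>o |C \<times> ?L|" by (rule card_of_image)
  also have "|C \<times> ?L| \<le>o |C \<times> C|" using card_of_Times_mono2 Suc by blast
  also have "|C \<times> C| \<le>o |C|" using card_of_Times_same_infinite Suc.prems ordIso_imp_ordLeq by blast
  finally show ?case .
qed

lemma card_of_Fpow_ordLeq_infinite: "\<not> finite C \<Longrightarrow> |Fpow C| \<le>o |C|"
proof -
  assume inf: "\<not> finite C"
  let ?L = "\<Union>n. {xs. set xs \<subseteq> C \<and> length xs = n}"
  have "Fpow C \<subseteq> set ` ?L"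
  proof
    fix S assume "S \<in> Fpow C"
    then obtain xs where "set xs = S" "S \<subseteq> C" using finite_list by (auto simp: Fpow_def)
    then show "S \<in> set ` ?L" by blast
  qed
  then have "|Fpow C| \<le>o |set ` ?L|" using card_of_mono1 by blast
  also have "|set ` ?L| \<le>o |?L|" by (rule card_of_image)
  also have "|?L| \<le>o |C|"
  proof (rule card_of_UNION_ordLeq_infinite[OF inf])
    show "|UNIV::nat set| \<le>o |C|" using infinite_iff_card_of_nat inf by blast
    show "\<forall>n\<in>UNIV. |{xs. set xs \<subseteq> C \<and> length xs = n}| \<le>o |C|"
      using card_of_lists_length_ordLeq[OF inf] by blast
  qed
  finally show ?thesis .
qed

lemma card_of_Fpow_ordLess_infinite:
  assumes "\<not> finite (UNIV::'k set)" "|C| <o |UNIV::'k set|"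
  shows "|Fpow C| <o |UNIV::'k set|"
proof (cases "finite C")
  case True
  then have "finite (Fpow C)" by (simp add: Fpow_def)
  then show ?thesis using card_of_finite_ordLess_infinite assms(1) by blast
next
  case False
  then show ?thesis using card_of_Fpow_ordLeq_infinite assms(2) ordLeq_ordLess_trans by blast
qed

lemma Well_order_restrict_le:
  fixes A :: "'a::wellorder set"
  shows "Well_order {(x, y). x \<in> A \<and> y \<in> A \<and> x \<le> y}"
    and "Field {(x, y). x \<in> A \<and> y \<in> A \<and> x \<le> y} = A"
proof -
  show F: "Field {(x, y). x \<in> A \<and> y \<in> A \<and> x \<le> y} = A" unfolding Field_def by auto
  have "wf ({(x, y). x \<in> A \<and> y \<in> A \<and> x \<le> y} - Id)"
    by (rule wf_subset[OF wf]) auto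
  then show "Well_order {(x, y). x \<in> A \<and> y \<in> A \<and> x \<le> y}" unfolding F
    unfolding well_order_on_def linear_order_on_def partial_order_on_def preorder_on_def
      refl_on_def trans_on_def antisym_on_def total_on_def
    by (auto simp: Field_def)
qed

lemma exists_order_iso_onto:
  fixes B :: "'b::wellorder set"
  assumes small: "\<forall>y\<in>B. |{z\<in>B. z < y}| <o |UNIV::'k::wellorder set|"
    and big: "\<not> |B| <o |UNIV::'k set|"
    and initial_small: "\<forall>a::'k. |{..<a}| <o |UNIV::'k set|"
  shows "oiso (UNIV::'k set) (<) B (<)"
proof -
  define r where "r = {(x::'k, y). x \<in> UNIV \<and> y \<in> UNIV \<and> x \<le> y}"
  define r' where "r' = {(x::'b, y). x \<in> B \<and> y \<in> B \<and> x \<le> y}"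
  have wr: "Well_order r" "Field r = UNIV" unfolding r_def by (rule Well_order_restrict_le)+
  have wr': "Well_order r'" "Field r' = B" unfolding r'_def by (rule Well_order_restrict_le)+
  have usr: "underS r a = {..<a}" for a unfolding underS_def r_def by auto
  have usr': "y \<in> B \<Longrightarrow> underS r' y = {z\<in>B. z < y}" for y unfolding underS_def r'_def by auto
  from wellorders_totally_ordered[OF wr(1) wr'(1)] show ?thesis
  proof
    assume "\<exists>f. embed r r' f"
    then obtain f where "embed r r' f" by blast
    then have c: "compat r r' f" and i: "inj f" and o: "wo_rel.ofilter r' (f ` UNIV)"
      using embed_iff_compat_inj_on_ofilter[OF wr(1) wr'(1)] wr by auto
    show ?thesis
    proof (rule oiso_strict_monoI)
      show "f ` UNIV = B"
      proof (rule ccontr)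
        assume "f ` UNIV \<noteq> B"
        with o wo_rel.ofilter_underS_Field[of r'] wr' obtain y where "y \<in> B" "f ` UNIV = underS r' y"
          unfolding wo_rel_def by auto
        then have "|f ` UNIV| <o |UNIV::'k set|" using usr' small by auto
        moreover have "|UNIV::'k set| =o |f ` UNIV|" using i card_of_ordIso by (metis bij_betw_imageI)
        ultimately show False using ordIso_ordLess_trans ordLess_irreflexive by blast
      qed
      fix a b :: 'k assume "a < b"
      moreover have "f a \<le> f b" using c \<open>a < b\<close> unfolding compat_def r_def r'_def by auto
      ultimately show "f a < f b" using i by (metis inj_eq le_less less_irrefl)
    qed auto
  next
    assume "\<exists>g. embed r' r g"
    then obtain g where "embed r' r g" by blast
    then have c: "compat r' r g" and i: "inj_on g B" and o: "wo_rel.ofilter r (g ` B)"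
      using embed_iff_compat_inj_on_ofilter[OF wr'(1) wr(1)] wr' by auto
    have "oiso B (<) (UNIV::'k set) (<)"
    proof (rule oiso_strict_monoI)
      show "g ` B = UNIV"
      proof (rule ccontr)
        assume "g ` B \<noteq> UNIV"
        with o wo_rel.ofilter_underS_Field[of r] wr obtain y where "g ` B = {..<y}"
          unfolding wo_rel_def usr by auto
        then have "|g ` B| <o |UNIV::'k set|" using initial_small by auto
        moreover have "|B| =o |g ` B|" using i card_of_ordIso by (metis bij_betw_imageI)
        ultimately show False using ordIso_ordLess_trans big by blast
      qed
      fix a b assume "a \<in> B" "b \<in> B" "a < b"
      moreover have "g a \<le> g b" using c calculation unfolding compat_def r_def r'_def by auto
      ultimately show "g a < g b" using i by (metis inj_on_eq_iff le_less less_irrefl)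
    qed auto
    then show ?thesis by (rule oiso_sym)
  qed
qed

lemma inf_card_typeD:
  assumes "inf_card_type TYPE('k::wellorder)"
  shows "\<not> finite (UNIV::'k set)" "\<forall>a::'k. |{..<a}| <o |UNIV::'k set|"
  using assms unfolding inf_card_type_def by auto

lemma card_of_colex_initial_segment:
  assumes "inf_card_type TYPE('k::wellorder)" "finite T"
  shows "|{z \<in> mset_set ` Collect finite. z < mset_set (T::'k set)}| <o |UNIV::'k set|"
proof (cases "T = {}")
  case True
  then show ?thesis
    using card_of_finite_ordLess_infinite[OF finite.emptyI inf_card_typeD(1)[OF assms(1)]] by simp
next
  case False
  note inf = inf_card_typeD[OF assms(1)]
  have "{z \<in> mset_set ` Collect finite. z < mset_set T} \<subseteq> mset_set ` Fpow {..Max T}"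
  proof
    fix z assume "z \<in> {z \<in> mset_set ` Collect finite. z < mset_set T}"
    then obtain S where "finite S" "z = mset_set S" "colex_less S T"
      using colex_less_iff_mset_less assms(2) by auto
    then show "z \<in> mset_set ` Fpow {..Max T}"
      using colex_less_subset_atMost assms(2) by (auto simp: Fpow_def)
  qed
  then have "|{z \<in> mset_set ` Collect finite. z < mset_set T}| \<le>o |mset_set ` Fpow {..Max T}|"
    by (rule card_of_mono1)
  then have "|{z \<in> mset_set ` Collect finite. z < mset_set T}| \<le>o |Fpow {..Max T}|"
    using card_of_image ordLeq_transitive by blast
  moreover have "|{..Max T}| <o |UNIV::'k set|"
    unfolding ivl_disj_un_singleton(2)[symmetric]
    using card_of_finite_ordLess_infinite[OF finite.emptyI[THEN finite.insertI] inf(1)]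
    by (intro card_of_Un_ordLess_infinite[OF inf(1) inf(2)[rule_format]])
  ultimately show ?thesis
    using card_of_Fpow_ordLess_infinite[OF inf(1)] ordLeq_ordLess_trans by blast
qed

text \<open>Through mset_set the finite sets under the colexicographic order become a subset of the
  well-order 'k multiset, which is then compared with 'k.\<close>

lemma exists_colex_order_iso:
  assumes "inf_card_type TYPE('k::wellorder)"
  shows "\<exists>\<Phi>::'k \<Rightarrow> 'k set. bij_betw \<Phi> UNIV (Collect finite) \<and>
    (\<forall>a b. a < b \<longleftrightarrow> colex_less (\<Phi> a) (\<Phi> b))"
proof -
  note inf = inf_card_typeD[OF assms]
  let ?M = "mset_set ` Collect finite :: 'k multiset set"
  have big: "\<not> |?M| <o |UNIV::'k set|"
  proof -
    have "inj (\<lambda>a::'k. mset_set {a})" "range (\<lambda>a::'k. mset_set {a}) \<subseteq> ?M"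
      by (auto simp: inj_on_def intro!: image_eqI[where x="{_}"])
    then have "|UNIV::'k set| \<le>o |?M|" using card_of_ordLeq by blast
    then show ?thesis using not_ordLess_ordLeq by blast
  qed
  obtain f :: "'k \<Rightarrow> 'k multiset" where f: "bij_betw f UNIV ?M" "\<forall>a b. a < b \<longleftrightarrow> f a < f b"
    using exists_order_iso_onto[OF _ big inf(2)] card_of_colex_initial_segment[OF assms]
    unfolding oiso_def by blast
  have bij_set_mset: "bij_betw set_mset ?M (Collect finite)"
    by (rule bij_betw_byWitness[where f'=mset_set]) auto
  have "f a = mset_set (set_mset (f a)) \<and> finite (set_mset (f a))" for a
  proof -
    obtain S where "finite S" "f a = mset_set S" using bij_betwE[OF f(1)] by blast
    then show ?thesis by simp
  qed
  then have "a < b \<longleftrightarrow> colex_less (set_mset (f a)) (set_mset (f b))" for a b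
    using f(2) colex_less_iff_mset_less by metis
  then show ?thesis using bij_betw_trans[OF f(1) bij_set_mset] unfolding comp_def by blast
qed

lemma exists_order_iso_onto_atLeast:
  assumes "inf_card_type TYPE('k::wellorder)"
  shows "oiso (UNIV::'k set) (<) {\<mu>::'k..} (<)"
proof (rule exists_order_iso_onto)
  note inf = inf_card_typeD[OF assms]
  show "\<forall>y\<in>{\<mu>..}. |{z\<in>{\<mu>..}. z < y}| <o |UNIV::'k set|"
    using inf(2) card_of_mono1[of "{z\<in>{\<mu>..}. z < _}" "{..<_}"] ordLeq_ordLess_trans by blast
  show "\<not> |{\<mu>..}| <o |UNIV::'k set|"
  proof
    assume "|{\<mu>..}| <o |UNIV::'k set|"
    then have "|{..<\<mu>} \<union> {\<mu>..}| <o |UNIV::'k set|"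
      using card_of_Un_ordLess_infinite[OF inf(1) inf(2)[rule_format]] by blast
    moreover have "{..<\<mu>} \<union> {\<mu>..} = UNIV" by auto
    ultimately show False using ordLess_irreflexive[of "|UNIV::'k set|"] by simp
  qed
  show "\<forall>a::'k. |{..<a}| <o |UNIV::'k set|" using inf(2) .
qed

end

lemma oadd_left_order_iso:
  assumes "inf_card_type TYPE('k::wellorder)"
  shows "bij_betw (oadd \<mu>) UNIV {\<mu>..}" "strict_mono (oadd (\<mu>::'k))"
proof -
  obtain s :: "'k \<Rightarrow> 'k" where s: "bij_betw s UNIV {\<mu>..}" "\<forall>a b. a < b \<longleftrightarrow> s a < s b"
    using exists_order_iso_onto_atLeast[OF assms] unfolding oiso_def by blast
  have ge: "\<mu> \<le> s b" for b using bij_betwE[OF s(1)] by simp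
  have "oadd \<mu> \<beta> = s \<beta>" for \<beta>
  proof (rule oadd_eqI[where f=id and h=s])
    show "id ` {..<\<mu>} \<union> s ` {..<\<beta>} = {..<s \<beta>}"
    proof (intro equalityI subsetI)
      fix d assume "d \<in> id ` {..<\<mu>} \<union> s ` {..<\<beta>}"
      then show "d \<in> {..<s \<beta>}" using ge[of \<beta>] s(2) by auto
    next
      fix d assume d: "d \<in> {..<s \<beta>}"
      show "d \<in> id ` {..<\<mu>} \<union> s ` {..<\<beta>}"
      proof (cases "d < \<mu>")
        case False
        then obtain b where "d = s b" using s(1) unfolding bij_betw_def by (auto simp: not_less)
        then show ?thesis using d s(2) by auto
      qed simp
    qed
  qed (use ge s(2) in \<open>auto intro: order.strict_trans2\<close>)
  then have "oadd \<mu> = s" by auto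
  then show "bij_betw (oadd \<mu>) UNIV {\<mu>..}" "strict_mono (oadd \<mu>)"
    using s by (auto simp: strict_mono_def)
qed

section \<open>Base-2 normal forms as finite sets of exponents\<close>

text \<open>\<Phi> is only afterwards identified with Lset (lemma Lset_eq).\<close>

locale colex_coding =
  fixes \<Phi> :: "'k::wellorder \<Rightarrow> 'k set"
  assumes inf_card: "inf_card_type TYPE('k)"
    and bij: "bij_betw \<Phi> UNIV (Collect finite)"
    and less_iff_colex_less: "a < b \<longleftrightarrow> colex_less (\<Phi> a) (\<Phi> b)"
begin

definition \<Psi> :: "'k set \<Rightarrow> 'k" where
  "\<Psi> = inv_into UNIV \<Phi>"

lemma finite_Phi [simp]: "finite (\<Phi> a)"
  using bij bij_betwE by blast

lemma Phi_eq_iff [simp]: "\<Phi> a = \<Phi> b \<longleftrightarrow> a = b"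
  using bij unfolding bij_betw_def inj_on_def by blast

lemma Psi_Phi [simp]: "\<Psi> (\<Phi> a) = a"
  unfolding \<Psi>_def using bij by (simp add: bij_betw_def)

lemma Phi_Psi [simp]: "finite S \<Longrightarrow> \<Phi> (\<Psi> S) = S"
  unfolding \<Psi>_def using bij by (simp add: bij_betw_def f_inv_into_f)

lemma less_Psi_iff: "finite T \<Longrightarrow> a < \<Psi> T \<longleftrightarrow> colex_less (\<Phi> a) T"
  using less_iff_colex_less[of a "\<Psi> T"] by simp

lemma Psi_less_Psi_iff: "finite S \<Longrightarrow> finite T \<Longrightarrow> \<Psi> S < \<Psi> T \<longleftrightarrow> colex_less S T"
  using less_iff_colex_less[of "\<Psi> S" "\<Psi> T"] by simp

lemma less_Psi_singleton_iff: "a < \<Psi> {\<mu>} \<longleftrightarrow> \<Phi> a \<subseteq> {..<\<mu>}"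
  using less_Psi_iff[of "{\<mu>}"] colex_less_singleton_iff[OF finite_Phi] by simp

lemma finite_Phi_subset:
  assumes "finite S"
  shows "finite {a. \<Phi> a \<subseteq> S}"
proof (rule finite_surj[where f=\<Psi> and A="Pow S"])
  show "finite (Pow S)" using assms by simp
  show "{a. \<Phi> a \<subseteq> S} \<subseteq> \<Psi> ` Pow S"
  proof
    fix a assume "a \<in> {a. \<Phi> a \<subseteq> S}"
    then show "a \<in> \<Psi> ` Pow S" by (metis Psi_Phi PowI imageI mem_Collect_eq)
  qed
qed

lemma oadd_less_oadd_iff [simp]: "oadd (\<mu>::'k) a < oadd \<mu> b \<longleftrightarrow> a < b"
  by (rule strict_mono_less[OF oadd_left_order_iso(2)[OF inf_card]])

lemma oadd_eq_oadd_iff [simp]: "oadd (\<mu>::'k) a = oadd \<mu> b \<longleftrightarrow> a = b"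
  by (rule strict_mono_eq[OF oadd_left_order_iso(2)[OF inf_card]])

lemma le_oadd: "(\<mu>::'k) \<le> oadd \<mu> a"
  using bij_betwE[OF oadd_left_order_iso(1)[OF inf_card]] by simp

lemma atLeast_subset_range_oadd: "{\<mu>::'k..} \<subseteq> range (oadd \<mu>)"
  using oadd_left_order_iso(1)[OF inf_card] by (simp add: bij_betw_def)

lemma Un_oadd_vimage: "(U::'k set) = (U \<inter> {..<\<mu>}) \<union> oadd \<mu> ` (oadd \<mu> -` U)"
  using atLeast_subset_range_oadd by (fastforce simp: not_less)

lemma oexp2_eq: "oexp2 \<mu> = \<Psi> {\<mu>}"
proof -
  have colex: "(\<lambda>S T. S \<noteq> T \<and> Max ((S - T) \<union> (T - S)) \<in> T) = colex_less"
    by (intro ext) (simp add: colex_less_def)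
  have "oiso {S. finite S \<and> S \<subseteq> {..<\<mu>}} colex_less {..<\<Psi> {\<mu>}} (<)"
  proof (rule oiso_strict_monoI[where f=\<Psi>])
    show "\<Psi> ` {S. finite S \<and> S \<subseteq> {..<\<mu>}} = {..<\<Psi> {\<mu>}}"
    proof (intro equalityI subsetI)
      fix a assume "a \<in> {..<\<Psi> {\<mu>}}"
      then have "\<Phi> a \<in> {S. finite S \<and> S \<subseteq> {..<\<mu>}}" using less_Psi_singleton_iff by simp
      then show "a \<in> \<Psi> ` {S. finite S \<and> S \<subseteq> {..<\<mu>}}" by (metis Psi_Phi imageI)
    qed (auto simp: Psi_less_Psi_iff colex_less_singleton_iff)
  qed (auto simp: Psi_less_Psi_iff colex_less_linear)
  then show ?thesis unfolding oexp2_def colex by (rule order_type_eqI)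
qed

lemma less_Psi_below:
  assumes "finite Q" "\<forall>p\<in>P. \<forall>q\<in>Q. q < p" "b < \<Psi> Q"
  shows "\<forall>p\<in>P. \<forall>v\<in>\<Phi> b. v < p"
proof -
  have "colex_less (\<Phi> b) Q" using assms(1,3) less_Psi_iff by simp
  then show ?thesis using colex_less_bounded[OF finite_Phi assms(1)] assms(2)
    by (meson order.strict_trans1)
qed

lemma lessThan_Psi_Un:
  assumes fin: "finite P" "finite Q" and below: "\<forall>p\<in>P. \<forall>q\<in>Q. q < p"
  shows "{..<\<Psi> (P \<union> Q)} = {..<\<Psi> P} \<union> (\<lambda>b. \<Psi> (P \<union> \<Phi> b)) ` {..<\<Psi> Q}"
proof (intro equalityI subsetI)
  fix d assume "d \<in> {..<\<Psi> (P \<union> Q)}"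
  then have less: "colex_less (\<Phi> d) (P \<union> Q)" using less_Psi_iff fin by simp
  show "d \<in> {..<\<Psi> P} \<union> (\<lambda>b. \<Psi> (P \<union> \<Phi> b)) ` {..<\<Psi> Q}"
  proof (cases "colex_less (\<Phi> d) P")
    case False
    from colex_between_Diff_less[OF finite_Phi fin below less False]
    have "P \<subseteq> \<Phi> d" "colex_less (\<Phi> d - P) Q" by auto
    then have "\<Psi> (\<Phi> d - P) \<in> {..<\<Psi> Q}" "d = \<Psi> (P \<union> \<Phi> (\<Psi> (\<Phi> d - P)))"
      using Psi_less_Psi_iff[of "\<Phi> d - P" Q] fin by (simp_all add: Un_absorb1)
    then show ?thesis by (intro UnI2 image_eqI)
  next
    case True
    then show ?thesis using less_Psi_iff fin(1) by simp
  qed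
next
  fix d assume "d \<in> {..<\<Psi> P} \<union> (\<lambda>b. \<Psi> (P \<union> \<Phi> b)) ` {..<\<Psi> Q}"
  then consider "d < \<Psi> P" | b where "b < \<Psi> Q" "d = \<Psi> (P \<union> \<Phi> b)" by auto
  then show "d \<in> {..<\<Psi> (P \<union> Q)}"
  proof cases
    case 1
    then show ?thesis using colex_less_Un_right[of "\<Phi> d" P Q] fin below less_Psi_iff by simp
  next
    case 2
    then have "\<forall>a\<in>\<Phi> b \<union> Q. \<forall>p\<in>P. a < p"
      using less_Psi_below[OF fin(2) below] below by (simp add: ball_Un)
    then have "colex_less (\<Phi> b \<union> P) (Q \<union> P)"
      using colex_less_Un_iff[of "\<Phi> b" Q P P] 2 fin less_Psi_iff by simp
    then show ?thesis using 2 fin Psi_less_Psi_iff by (simp add: Un_commute)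
  qed
qed

lemma oadd_Psi_Un:
  assumes fin: "finite P" "finite Q" and below: "\<forall>p\<in>P. \<forall>q\<in>Q. q < p"
  shows "oadd (\<Psi> P) (\<Psi> Q) = \<Psi> (P \<union> Q)"
proof (rule oadd_eqI[where f=id and h="\<lambda>b. \<Psi> (P \<union> \<Phi> b)"])
  show "id ` {..<\<Psi> P} \<union> (\<lambda>b. \<Psi> (P \<union> \<Phi> b)) ` {..<\<Psi> Q} = {..<\<Psi> (P \<union> Q)}"
    using lessThan_Psi_Un[OF assms] by simp
next
  fix x y assume "x < y" "y < \<Psi> Q"
  moreover have "x < \<Psi> Q" using calculation by simp
  ultimately have "\<forall>a\<in>\<Phi> x \<union> \<Phi> y. \<forall>p\<in>P. a < p"
    using less_Psi_below[OF fin(2) below] by (simp add: ball_Un)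
  then have "colex_less (\<Phi> x \<union> P) (\<Phi> y \<union> P)"
    using colex_less_Un_iff[of "\<Phi> x" "\<Phi> y" P P] fin \<open>x < y\<close> less_iff_colex_less by simp
  then show "\<Psi> (P \<union> \<Phi> x) < \<Psi> (P \<union> \<Phi> y)" using fin Psi_less_Psi_iff by (simp add: Un_commute)
next
  fix x y assume "x < \<Psi> P" "y < \<Psi> Q"
  then show "id x < \<Psi> (P \<union> \<Phi> y)"
    using colex_less_Un_right[of "\<Phi> x" P "\<Phi> y"] less_Psi_below[OF fin(2) below] fin less_Psi_iff
    by simp
qed simp

lemma Phi_oadd:
  assumes "\<forall>p\<in>\<Phi> a. \<forall>q\<in>\<Phi> b. q < p"
  shows "\<Phi> (oadd a b) = \<Phi> a \<union> \<Phi> b"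
  using oadd_Psi_Un[of "\<Phi> a" "\<Phi> b"] assms by simp

lemma colex_less_Un_oadd_iff:
  assumes "A1 \<subseteq> {..<\<mu>::'k}" "A2 \<subseteq> {..<\<mu>}" "finite A1" "finite A2" "finite X" "finite Y"
  shows "colex_less (A1 \<union> oadd \<mu> ` X) (A2 \<union> oadd \<mu> ` Y) \<longleftrightarrow>
    colex_less X Y \<or> (X = Y \<and> colex_less A1 A2)"
proof -
  have "\<forall>a\<in>A1 \<union> A2. \<forall>b\<in>oadd \<mu> ` X \<union> oadd \<mu> ` Y. a < b"
  proof (intro ballI)
    fix a b assume "a \<in> A1 \<union> A2" "b \<in> oadd \<mu> ` X \<union> oadd \<mu> ` Y"
    then have "a < \<mu>" "\<mu> \<le> b" using assms(1,2) le_oadd by auto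
    then show "a < b" by simp
  qed
  then have "colex_less (A1 \<union> oadd \<mu> ` X) (A2 \<union> oadd \<mu> ` Y) \<longleftrightarrow>
      colex_less (oadd \<mu> ` X) (oadd \<mu> ` Y) \<or> (oadd \<mu> ` X = oadd \<mu> ` Y \<and> colex_less A1 A2)"
    using assms by (intro colex_less_Un_iff) auto
  moreover have "oadd \<mu> ` X = oadd \<mu> ` Y \<longleftrightarrow> X = Y"
    using oadd_eq_oadd_iff by (simp add: inj_def inj_image_eq_iff)
  ultimately show ?thesis
    using colex_less_image[OF oadd_left_order_iso(2)[OF inf_card] assms(5,6)] by simp
qed

lemma lessThan_Psi_image_oadd:
  "{..<\<Psi> (oadd \<mu> ` \<Phi> b)} = (\<lambda>(a, c). \<Psi> (\<Phi> a \<union> oadd \<mu> ` \<Phi> c)) ` ({..<\<Psi> {\<mu>}} \<times> {..<b})"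
proof (intro equalityI subsetI)
  fix d assume d: "d \<in> {..<\<Psi> (oadd \<mu> ` \<Phi> b)}"
  define A where "A = \<Phi> d \<inter> {..<\<mu>}"
  define X where "X = oadd \<mu> -` \<Phi> d"
  have split: "\<Phi> d = A \<union> oadd \<mu> ` X" unfolding A_def X_def by (rule Un_oadd_vimage)
  have fX: "finite X" unfolding X_def by (rule finite_vimageI) (auto simp: inj_def)
  have "colex_less (A \<union> oadd \<mu> ` X) ({} \<union> oadd \<mu> ` \<Phi> b)"
    using d split less_Psi_iff by simp
  then have "colex_less X (\<Phi> b)"
    using colex_less_Un_oadd_iff[of A \<mu> "{}" X "\<Phi> b"] fX not_colex_less_empty
    unfolding A_def by auto
  then have "\<Psi> X < b" using Psi_less_Psi_iff[OF fX, of "\<Phi> b"] by simp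
  moreover have "\<Psi> A < \<Psi> {\<mu>}"
    using Psi_less_Psi_iff colex_less_singleton_iff[of "\<Phi> d \<inter> {..<\<mu>}" \<mu>] unfolding A_def by simp
  moreover have "d = \<Psi> (\<Phi> (\<Psi> A) \<union> oadd \<mu> ` \<Phi> (\<Psi> X))"
    using fX split unfolding A_def by simp
  ultimately show "d \<in> (\<lambda>(a, c). \<Psi> (\<Phi> a \<union> oadd \<mu> ` \<Phi> c)) ` ({..<\<Psi> {\<mu>}} \<times> {..<b})" by force
next
  fix d assume "d \<in> (\<lambda>(a, c). \<Psi> (\<Phi> a \<union> oadd \<mu> ` \<Phi> c)) ` ({..<\<Psi> {\<mu>}} \<times> {..<b})"
  then obtain a c where ac: "a < \<Psi> {\<mu>}" "c < b" "d = \<Psi> (\<Phi> a \<union> oadd \<mu> ` \<Phi> c)" by auto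
  have "colex_less (\<Phi> a \<union> oadd \<mu> ` \<Phi> c) ({} \<union> oadd \<mu> ` \<Phi> b)"
    using colex_less_Un_oadd_iff[of "\<Phi> a" \<mu> "{}"] less_Psi_singleton_iff ac less_iff_colex_less
    by simp
  then show "d \<in> {..<\<Psi> (oadd \<mu> ` \<Phi> b)}" using ac Psi_less_Psi_iff by simp
qed

lemma Phi_omul_oexp2: "\<Phi> (omul (oexp2 \<mu>) b) = oadd \<mu> ` \<Phi> b"
proof -
  have "omul (\<Psi> {\<mu>}) b = \<Psi> (oadd \<mu> ` \<Phi> b)"
  proof (rule omul_eqI[where g="\<lambda>a c. \<Psi> (\<Phi> a \<union> oadd \<mu> ` \<Phi> c)"])
    show "(\<lambda>(a, c). \<Psi> (\<Phi> a \<union> oadd \<mu> ` \<Phi> c)) ` ({..<\<Psi> {\<mu>}} \<times> {..<b}) = {..<\<Psi> (oadd \<mu> ` \<Phi> b)}"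
      by (rule lessThan_Psi_image_oadd[symmetric])
  next
    fix a1 c1 a2 c2 :: 'k
    assume "a1 < \<Psi> {\<mu>}" "a2 < \<Psi> {\<mu>}" "c1 < c2 \<or> c1 = c2 \<and> a1 < a2"
    then show "\<Psi> (\<Phi> a1 \<union> oadd \<mu> ` \<Phi> c1) < \<Psi> (\<Phi> a2 \<union> oadd \<mu> ` \<Phi> c2)"
      using colex_less_Un_oadd_iff[of "\<Phi> a1" \<mu> "\<Phi> a2" "\<Phi> c1" "\<Phi> c2"] less_Psi_singleton_iff
        Psi_less_Psi_iff less_iff_colex_less by auto
  qed
  then show ?thesis by (simp add: oexp2_eq)
qed

lemma ozero_eq: "ozero = \<Psi> {}"
  unfolding ozero_def
proof (rule Least_equality)
  fix y show "\<Psi> {} \<le> y" using less_Psi_iff[of "{}" y] not_colex_less_empty by (simp add: not_less[symmetric])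
qed simp

lemma nf_val_eq: "sorted_wrt (>) xs \<Longrightarrow> nf_val xs = \<Psi> (set xs)"
proof (induction xs)
  case Nil
  then show ?case by (simp add: ozero_eq)
next
  case (Cons a as)
  then have "nf_val (a # as) = oadd (\<Psi> {a}) (\<Psi> (set as))" by (simp add: oexp2_eq)
  also have "\<dots> = \<Psi> ({a} \<union> set as)" using Cons.prems by (intro oadd_Psi_Un) auto
  finally show ?case by simp
qed

lemma Lset_eq [simp]: "Lset c = \<Phi> c"
proof -
  define xs where "xs = rev (sorted_list_of_set (\<Phi> c))"
  have xs: "sorted_wrt (>) xs" "set xs = \<Phi> c"
    unfolding xs_def sorted_wrt_rev using strict_sorted_list_of_set[of "\<Phi> c"] by simp_all
  have "(THE xs. sorted_wrt (>) xs \<and> nf_val xs = c) = xs"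
  proof (rule the_equality)
    show "sorted_wrt (>) xs \<and> nf_val xs = c" using xs nf_val_eq by simp
    fix ys assume ys: "sorted_wrt (>) ys \<and> nf_val ys = c"
    then have "set ys = \<Phi> c" using nf_val_eq[of ys] Phi_Psi[of "set ys"] by auto
    moreover have "sorted_wrt (<) (rev ys)" "sorted_wrt (<) (rev xs)"
      using ys xs by (simp_all add: sorted_wrt_rev)
    ultimately have "rev ys = rev xs"
      using sorted_distinct_set_unique[of "rev ys" "rev xs"] xs by (simp add: strict_sorted_iff)
    then show "ys = xs" by simp
  qed
  then show ?thesis unfolding Lset_def using xs by simp
qed

lemma Phi_ojoin [simp]: "\<Phi> (ojoin b g) = \<Phi> b \<union> \<Phi> g"
proof -
  have "ojoin b g = \<Psi> (\<Phi> b \<union> \<Phi> g)"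
    unfolding ojoin_def by (rule the_equality) (auto simp: Phi_eq_iff[symmetric] simp del: Phi_eq_iff)
  then show ?thesis by simp
qed

end

section \<open>The coding of pairs\<close>

context colex_coding
begin

lemma less_oexp2_iff: "a < oexp2 \<mu> \<longleftrightarrow> \<Phi> a \<subseteq> {..<\<mu>}"
  by (simp add: oexp2_eq less_Psi_singleton_iff)

lemma lessThan_below_oadd:
  assumes "A \<subseteq> {..<\<mu>::'k}"
  shows "\<forall>p\<in>oadd \<mu> ` X. \<forall>q\<in>A. q < p"
proof (intro ballI)
  fix p q assume "p \<in> oadd \<mu> ` X" "q \<in> A"
  then have "q < \<mu>" "\<mu> \<le> p" using assms le_oadd by auto
  then show "q < p" by simp
qed

lemma notin_image_oadd: "z < \<mu> \<Longrightarrow> z \<notin> oadd (\<mu>::'k) ` X"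
  using le_oadd[of \<mu>] leD by blast

lemma Phi_pair:
  assumes "g < oexp2 \<eta>"
  shows "\<Phi> (oadd (omul (oexp2 \<eta>) b) g) = oadd \<eta> ` \<Phi> b \<union> \<Phi> g"
  using Phi_oadd[of "omul (oexp2 \<eta>) b" g] lessThan_below_oadd[of "\<Phi> g" \<eta> "\<Phi> b"] assms
  by (simp add: Phi_omul_oexp2 less_oexp2_iff)

lemma pair_inj:
  assumes "g < oexp2 (\<eta>::'k)" "g' < oexp2 \<eta>"
    and "oadd (omul (oexp2 \<eta>) b) g = oadd (omul (oexp2 \<eta>) b') g'"
  shows "b = b' \<and> g = g'"
proof -
  have low: "\<Phi> g \<subseteq> {..<\<eta>}" "\<Phi> g' \<subseteq> {..<\<eta>}" using assms(1,2) less_oexp2_iff by auto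
  have high: "oadd \<eta> ` X \<inter> {..<\<eta>} = {}" for X using le_oadd by (auto simp: not_less[symmetric])
  have eq: "oadd \<eta> ` \<Phi> b \<union> \<Phi> g = oadd \<eta> ` \<Phi> b' \<union> \<Phi> g'"
    using arg_cong[OF assms(3), of \<Phi>] Phi_pair assms(1,2) by simp
  then have "(oadd \<eta> ` \<Phi> b \<union> \<Phi> g) \<inter> {..<\<eta>} = (oadd \<eta> ` \<Phi> b' \<union> \<Phi> g') \<inter> {..<\<eta>}" by simp
  then have g: "\<Phi> g = \<Phi> g'" using low high by (simp add: Int_Un_distrib2 Int_absorb2)
  have "oadd \<eta> ` \<Phi> b = (oadd \<eta> ` \<Phi> b \<union> \<Phi> g) - \<Phi> g" using low(1) high by blast
  also have "\<dots> = (oadd \<eta> ` \<Phi> b' \<union> \<Phi> g') - \<Phi> g'" using eq g by simp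
  also have "\<dots> = oadd \<eta> ` \<Phi> b'" using low(2) high by blast
  finally have "\<Phi> b = \<Phi> b'" by (simp add: inj_def inj_image_eq_iff)
  with g show ?thesis by simp
qed

lemma yvec_pair:
  assumes "b < oexp2 (\<eta>::'k)" "g < oexp2 \<eta>"
  shows "yvec \<eta> x (oadd (omul (oexp2 \<eta>) b) g) = x b g"
proof -
  have "(THE v. \<exists>b' g'. b' < oexp2 \<eta> \<and> g' < oexp2 \<eta> \<and>
      oadd (omul (oexp2 \<eta>) b) g = oadd (omul (oexp2 \<eta>) b') g' \<and> v = x b' g') = x b g"
    by (rule the_equality) (use assms pair_inj in blast)+
  then show ?thesis unfolding yvec_def using assms by auto
qed

lemma Phi_Dset:
  assumes "\<alpha> \<in> Dset \<eta>"
  obtains a \<xi> where "\<Phi> \<xi> \<subseteq> {..<\<eta>}"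
    and "\<Phi> \<alpha> = oadd (oadd \<eta> \<eta>) ` \<Phi> a \<union> oadd \<eta> ` \<Phi> \<xi> \<union> \<Phi> \<xi>"
proof -
  obtain a \<xi> where \<xi>: "\<xi> < oexp2 \<eta>"
    and \<alpha>: "\<alpha> = oadd (oadd (omul (oexp2 (oadd \<eta> \<eta>)) a) (omul (oexp2 \<eta>) \<xi>)) \<xi>"
    using assms unfolding Dset_def by blast
  have low: "\<Phi> \<xi> \<subseteq> {..<\<eta>}" using \<xi> less_oexp2_iff by simp
  have "\<forall>p\<in>oadd (oadd \<eta> \<eta>) ` \<Phi> a. \<forall>q\<in>oadd \<eta> ` \<Phi> \<xi>. q < p"
  proof (rule lessThan_below_oadd)
    show "oadd \<eta> ` \<Phi> \<xi> \<subseteq> {..<oadd \<eta> \<eta>}" using low by auto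
  qed
  then have "\<Phi> (oadd (omul (oexp2 (oadd \<eta> \<eta>)) a) (omul (oexp2 \<eta>) \<xi>)) =
      oadd (oadd \<eta> \<eta>) ` \<Phi> a \<union> oadd \<eta> ` \<Phi> \<xi>"
    using Phi_oadd by (simp add: Phi_omul_oexp2)
  moreover have "\<forall>p\<in>oadd (oadd \<eta> \<eta>) ` \<Phi> a \<union> oadd \<eta> ` \<Phi> \<xi>. \<forall>q\<in>\<Phi> \<xi>. q < p"
  proof (intro ballI)
    fix p q assume p: "p \<in> oadd (oadd \<eta> \<eta>) ` \<Phi> a \<union> oadd \<eta> ` \<Phi> \<xi>" and "q \<in> \<Phi> \<xi>"
    have "\<eta> \<le> p" using p le_oadd[of \<eta>] le_oadd[of "oadd \<eta> \<eta>"] by (auto intro: order.trans)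
    then show "q < p" using low \<open>q \<in> \<Phi> \<xi>\<close> by (auto intro: order.strict_trans2)
  qed
  ultimately have "\<Phi> \<alpha> = oadd (oadd \<eta> \<eta>) ` \<Phi> a \<union> oadd \<eta> ` \<Phi> \<xi> \<union> \<Phi> \<xi>"
    unfolding \<alpha> using Phi_oadd by simp
  with low show thesis by (rule that)
qed

text \<open>The heart of the argument: for \<alpha> \<in> D(\<eta>) the low digits of \<alpha> appear both unshifted
  and shifted by \<eta>, so 2^\<eta>\<beta> + \<gamma> \<sqsubseteq> \<alpha> iff \<beta> \<or> \<gamma> \<sqsubseteq> \<alpha>.\<close>

lemma pair_subset_Dset_iff:
  assumes "\<alpha> \<in> Dset \<eta>" "b < oexp2 \<eta>" "g < oexp2 \<eta>"
  shows "\<Phi> (oadd (omul (oexp2 \<eta>) b) g) \<subseteq> \<Phi> \<alpha> \<longleftrightarrow> \<Phi> b \<union> \<Phi> g \<subseteq> \<Phi> \<alpha>"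
proof -
  obtain a \<xi> where low: "\<Phi> \<xi> \<subseteq> {..<\<eta>}"
    and \<alpha>: "\<Phi> \<alpha> = oadd (oadd \<eta> \<eta>) ` \<Phi> a \<union> oadd \<eta> ` \<Phi> \<xi> \<union> \<Phi> \<xi>"
    by (rule Phi_Dset[OF assms(1)])
  have bg: "\<Phi> b \<subseteq> {..<\<eta>}" "\<Phi> g \<subseteq> {..<\<eta>}" using assms(2,3) less_oexp2_iff by auto
  have unshifted: "z \<in> \<Phi> \<alpha> \<longleftrightarrow> z \<in> \<Phi> \<xi>" if "z < \<eta>" for z
  proof -
    have "z < oadd \<eta> \<eta>" using that le_oadd[of \<eta> \<eta>] by simp
    then show ?thesis using that notin_image_oadd unfolding \<alpha> by blast
  qed
  have shifted: "oadd \<eta> z \<in> \<Phi> \<alpha> \<longleftrightarrow> z \<in> \<Phi> \<xi>" if "z < \<eta>" for z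
  proof -
    have "oadd \<eta> z \<notin> oadd (oadd \<eta> \<eta>) ` \<Phi> a" using that by (simp add: notin_image_oadd)
    moreover have "oadd \<eta> z \<notin> \<Phi> \<xi>" using low le_oadd[of \<eta> z] by auto
    ultimately show ?thesis unfolding \<alpha> by auto
  qed
  have b: "(\<forall>z\<in>\<Phi> b. oadd \<eta> z \<in> \<Phi> \<alpha>) \<longleftrightarrow> (\<forall>z\<in>\<Phi> b. z \<in> \<Phi> \<alpha>)"
    by (rule ball_cong[OF refl]) (use bg(1) shifted unshifted in auto)
  have "\<Phi> (oadd (omul (oexp2 \<eta>) b) g) \<subseteq> \<Phi> \<alpha> \<longleftrightarrow>
      (\<forall>z\<in>\<Phi> b. oadd \<eta> z \<in> \<Phi> \<alpha>) \<and> \<Phi> g \<subseteq> \<Phi> \<alpha>"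
    using Phi_pair[OF assms(3), of b] by (simp add: image_subset_iff)
  then show ?thesis using b by (simp add: subset_eq ball_Un)
qed

lemma fvec_join_sum:
  "fvec (\<lambda>e. \<Sum>(b, g)\<in>{(b, g). ojoin b g = e}. x b g) \<alpha> = (\<Sum>(b, g)\<in>{(b, g). \<Phi> b \<union> \<Phi> g \<subseteq> \<Phi> \<alpha>}. x b g)"
proof -
  let ?Q = "{(b, g). \<Phi> b \<union> \<Phi> g \<subseteq> \<Phi> \<alpha>}"
  let ?join = "\<lambda>(b, g). ojoin b g"
  have fin: "finite {e. \<Phi> e \<subseteq> \<Phi> \<alpha>}" by (simp add: finite_Phi_subset)
  have "finite ?Q" using finite_subset[OF _ finite_cartesian_product[OF fin fin]] by auto
  have "fvec (\<lambda>e. \<Sum>(b, g)\<in>{(b, g). ojoin b g = e}. x b g) \<alpha>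
      = (\<Sum>e\<in>{e. \<Phi> e \<subseteq> \<Phi> \<alpha>}. \<Sum>(b, g)\<in>{(b, g). ojoin b g = e}. x b g)"
    unfolding fvec_def by simp
  also have "\<dots> = (\<Sum>e\<in>{e. \<Phi> e \<subseteq> \<Phi> \<alpha>}. \<Sum>p\<in>{p\<in>?Q. ?join p = e}. case_prod x p)"
  proof (rule sum.cong[OF refl])
    fix e assume "e \<in> {e. \<Phi> e \<subseteq> \<Phi> \<alpha>}"
    then have "{(b, g). ojoin b g = e} = {p\<in>?Q. ?join p = e}" by auto
    then show "(\<Sum>(b, g)\<in>{(b, g). ojoin b g = e}. x b g) = (\<Sum>p\<in>{p\<in>?Q. ?join p = e}. case_prod x p)"
      by simp
  qed
  also have "\<dots> = (\<Sum>p\<in>?Q. case_prod x p)"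
    by (rule sum.group[OF \<open>finite ?Q\<close> fin]) auto
  finally show ?thesis by simp
qed

lemma fvec_yvec:
  "fvec (yvec \<eta> x) \<alpha> = (\<Sum>(b, g)\<in>{(b, g). b < oexp2 \<eta> \<and> g < oexp2 \<eta> \<and>
      \<Phi> (oadd (omul (oexp2 \<eta>) b) g) \<subseteq> \<Phi> \<alpha>}. x b g)"
proof -
  let ?pair = "\<lambda>(b, g). oadd (omul (oexp2 \<eta>) b) g"
  let ?P = "{(b, g). b < oexp2 \<eta> \<and> g < oexp2 \<eta> \<and> \<Phi> (oadd (omul (oexp2 \<eta>) b) g) \<subseteq> \<Phi> \<alpha>}"
  have fin: "finite {d. \<Phi> d \<subseteq> \<Phi> \<alpha>}" by (simp add: finite_Phi_subset)
  have "fvec (yvec \<eta> x) \<alpha> = (\<Sum>d\<in>{d. \<Phi> d \<subseteq> \<Phi> \<alpha>}. yvec \<eta> x d)"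
    unfolding fvec_def by simp
  also have "\<dots> = (\<Sum>d\<in>?pair ` ?P. yvec \<eta> x d)"
  proof (rule sum.mono_neutral_right[OF fin])
    show "?pair ` ?P \<subseteq> {d. \<Phi> d \<subseteq> \<Phi> \<alpha>}" by auto
    show "\<forall>d\<in>{d. \<Phi> d \<subseteq> \<Phi> \<alpha>} - ?pair ` ?P. yvec \<eta> x d = 0"
      unfolding yvec_def by (auto intro!: image_eqI)
  qed
  also have "\<dots> = (\<Sum>p\<in>?P. yvec \<eta> x (?pair p))"
    by (rule sum.reindex[unfolded comp_def]) (auto intro!: inj_onI dest: pair_inj)
  also have "\<dots> = (\<Sum>p\<in>?P. case_prod x p)"
    by (rule sum.cong[OF refl]) (auto simp: yvec_pair)
  finally show ?thesis by simp
qed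

lemma fvec_join_sum_eq_fvec_yvec:
  assumes supp: "\<forall>b g. (oexp2 \<eta> \<le> b \<or> oexp2 \<eta> \<le> g) \<longrightarrow> x b g = 0" and "(\<alpha>::'k) \<in> Dset \<eta>"
  shows "fvec (\<lambda>e. \<Sum>(b, g)\<in>{(b, g). ojoin b g = e}. x b g) \<alpha> = fvec (yvec \<eta> x) \<alpha>"
proof -
  let ?Q = "{(b, g). \<Phi> b \<union> \<Phi> g \<subseteq> \<Phi> \<alpha>}"
  have supp': "x b g \<noteq> 0 \<Longrightarrow> b < oexp2 \<eta> \<and> g < oexp2 \<eta>" for b g
    using supp by (meson not_le)
  have fin: "finite {e. \<Phi> e \<subseteq> \<Phi> \<alpha>}" by (simp add: finite_Phi_subset)
  have "finite ?Q" using finite_subset[OF _ finite_cartesian_product[OF fin fin]] by auto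
  have "{(b, g). b < oexp2 \<eta> \<and> g < oexp2 \<eta> \<and> \<Phi> (oadd (omul (oexp2 \<eta>) b) g) \<subseteq> \<Phi> \<alpha>}
      = {(b, g) \<in> ?Q. b < oexp2 \<eta> \<and> g < oexp2 \<eta>}"
    using pair_subset_Dset_iff[OF assms(2)] by blast
  moreover have "(\<Sum>(b, g)\<in>?Q. x b g) = (\<Sum>(b, g)\<in>{(b, g) \<in> ?Q. b < oexp2 \<eta> \<and> g < oexp2 \<eta>}. x b g)"
    by (rule sum.mono_neutral_right[OF \<open>finite ?Q\<close>]) (use supp' in auto)
  ultimately show ?thesis by (simp add: fvec_join_sum fvec_yvec)
qed

end

lemma ucls_eqI:
  assumes "is_ultrafilter U" "{a. f a = g a} \<in> U"
  shows "ucls U f = ucls U g"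
proof -
  have "{a. g a = h a} \<in> U" if "{a. f a = h a} \<in> U" "{a. f a = g a} \<in> U" for f g h :: "'a \<Rightarrow> int"
  proof -
    have "{a. f a = h a} \<inter> {a. f a = g a} \<in> U" using assms(1) that unfolding is_ultrafilter_def by blast
    moreover have "{a. f a = h a} \<inter> {a. f a = g a} \<subseteq> {a. g a = h a}" by auto
    ultimately show ?thesis using assms(1) unfolding is_ultrafilter_def by blast
  qed
  moreover have "{a. g a = f a} \<in> U" using assms(2) by (simp add: eq_commute)
  ultimately show ?thesis unfolding ucls_def using assms(2) by blast
qed

theorem mainTheorem5:
  fixes U :: "'k::wellorder set set" and \<eta> :: 'k and x :: "'k \<Rightarrow> 'k \<Rightarrow> int"
  assumes "inf_card_type TYPE('k)"
    and "is_ultrafilter U"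
    and "superfine U"
    and "\<forall>b g. (oexp2 \<eta> \<le> b \<or> oexp2 \<eta> \<le> g) \<longrightarrow> x b g = 0"
  shows "dsum U x = Esum U (yvec \<eta> x)"
proof -
  obtain \<Phi> :: "'k \<Rightarrow> 'k set" where "colex_coding \<Phi>"
    using exists_colex_order_iso[OF assms(1)] assms(1) unfolding colex_coding_def by blast
  define w where "w = (\<lambda>e. \<Sum>(b, g)\<in>{(b, g). ojoin b g = e}. x b g)"
  have "Dset \<eta> \<subseteq> {a. fvec w a = fvec (yvec \<eta> x) a}"
    using colex_coding.fvec_join_sum_eq_fvec_yvec[OF \<open>colex_coding \<Phi>\<close> assms(4)]
    unfolding w_def by blast
  moreover have "Dset \<eta> \<inter> cone \<eta> \<in> U" using assms(3) unfolding superfine_def by blast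
  ultimately have "{a. fvec w a = fvec (yvec \<eta> x) a} \<in> U"
    using assms(2) unfolding is_ultrafilter_def by blast
  then show ?thesis unfolding dsum_def Esum_def w_def[symmetric] by (rule ucls_eqI[OF assms(2)])
qed

end
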